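(* Let $\alpha>0$. The space $BV_\alpha(\mathbb{R}^d)$ embeds compactly into $L^1(\mathbb{R}^d)$: every sequence $(g_n)$ with $\sup_n\|g_n\|_{BV_\alpha}<\infty$ has a subsequence converging in $L^1(\mathbb{R}^d)$.
   Context: Let $\rho_\alpha(x)=(1+|x|^2)^{\alpha/2}$ and $L^1_\alpha(\mathbb{R}^d)$ the space of measurable $f$ with $\|f\|_{L^1_\alpha}:=\int\rho_\alpha|f|\,dx<\infty$. Let $\psi$ be a Radon probability measure on $\mathbb{R}^d$ absolutely continuous with respect to Lebesgue measure, with a continuous bounded density $\psi'$ satisfying $\psi'>0$ everywhere. For Borel $S$, $\operatorname{osc}(f,S):=\operatorname{ess\,sup}_S f-\operatorname{ess\,inf}_S f$ (essential with respect to Lebesgue measure). Define $\|f\|_{BV_\alpha}:=\|f\|_{L^1_\alpha}+\sup_{\epsilon\in(0,1]}\epsilon^{-1}\int_{\mathbb{R}^d}\operatorname{osc}(f,B_\epsilon(x))\,d\psi(x)$, and $BV_\alpha(\mathbb{R}^d)$ is the space of $f\in L^1_\alpha$ with finite $BV_\alpha$ norm. *)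

theory Defs
  imports "HOL-Probability.Probability"
begin

definition rho :: "real \<Rightarrow> 'a::euclidean_space \<Rightarrow> real" where
  "rho \<alpha> x = (1 + (norm x)\<^sup>2) powr (\<alpha> / 2)"

definition L1w_norm :: "real \<Rightarrow> ('a::euclidean_space \<Rightarrow> real) \<Rightarrow> ennreal" where
  "L1w_norm \<alpha> f = (\<integral>\<^sup>+ x. ennreal (rho \<alpha> x * \<bar>f x\<bar>) \<partial>lebesgue)"

definition ess_sup_on :: "'a::euclidean_space set \<Rightarrow> ('a \<Rightarrow> real) \<Rightarrow> ereal" where
  "ess_sup_on S f = Inf {c::ereal. AE x in lebesgue. x \<in> S \<longrightarrow> ereal (f x) \<le> c}"

definition ess_inf_on :: "'a::euclidean_space set \<Rightarrow> ('a \<Rightarrow> real) \<Rightarrow> ereal" where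
  "ess_inf_on S f = Sup {c::ereal. AE x in lebesgue. x \<in> S \<longrightarrow> c \<le> ereal (f x)}"

definition osc :: "('a::euclidean_space \<Rightarrow> real) \<Rightarrow> 'a set \<Rightarrow> ereal" where
  "osc f S = ess_sup_on S f - ess_inf_on S f"

definition BVw_norm :: "'a::euclidean_space measure \<Rightarrow> real \<Rightarrow> ('a \<Rightarrow> real) \<Rightarrow> ennreal" where
  "BVw_norm \<psi> \<alpha> f = L1w_norm \<alpha> f +
     (SUP \<epsilon>\<in>{0<..1::real}. (\<integral>\<^sup>+ x. e2ennreal (osc f (ball x \<epsilon>)) \<partial>\<psi>) / ennreal \<epsilon>)"

end

theory Submission
  imports Defs
begin

text \<open>
  Fix a mesh \<open>\<delta>\<close> and replace \<open>g\<close> on every cell of the grid \<open>\<delta> \<int>\<^sup>d\<close> by its essential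
  infimum there. A cell lies in the ball of radius \<open>d \<delta>\<close> around each of its points, so the error
  at \<open>x\<close> is at most \<open>osc(g, B(x, d \<delta>))\<close>; where \<open>\<psi>' \<ge> m\<close>, the BV bound makes the L1 error at most
  \<open>C d \<delta> / m\<close>, uniformly in \<open>n\<close>. The cell values are bounded uniformly in \<open>n\<close> (the L1 norm of \<open>g\<close>
  plus the approximation error, divided by the cell volume), so a diagonal argument over the countably
  many cells of the meshes \<open>1 / (d (k + 1))\<close> yields a subsequence along which all grid approximations
  converge pointwise, hence in L1 on balls by dominated convergence. The weight \<open>\<rho>\<^sub>\<alpha>\<close> makes the
  mass outside large balls uniformly small. Hence the subsequence is Cauchy in L1, and L1 is complete.
\<close>

section \<open>Essential oscillation\<close>

lemma AE_le_ess_sup_on: "AE x in lebesgue. x \<in> S \<longrightarrow> ereal (f x) \<le> ess_sup_on S f"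
proof -
  let ?X = "{c::ereal. AE x in lebesgue. x \<in> S \<longrightarrow> ereal (f x) \<le> c}"
  have "\<infinity> \<in> ?X" by simp
  then obtain c :: "nat \<Rightarrow> ereal" where c: "range c \<subseteq> ?X" "ess_sup_on S f = (INF i. c i)"
    using Inf_countable_INF[of ?X] unfolding ess_sup_on_def by blast
  have "AE x in lebesgue. \<forall>i. x \<in> S \<longrightarrow> ereal (f x) \<le> c i"
    using c(1) by (subst AE_all_countable) auto
  then show ?thesis
    by eventually_elim (simp add: c(2) le_INF_iff)
qed

lemma AE_ess_inf_on_le: "AE x in lebesgue. x \<in> S \<longrightarrow> ess_inf_on S f \<le> ereal (f x)"
proof -
  let ?X = "{c::ereal. AE x in lebesgue. x \<in> S \<longrightarrow> c \<le> ereal (f x)}"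
  have "-\<infinity> \<in> ?X" by simp
  then obtain c :: "nat \<Rightarrow> ereal" where c: "range c \<subseteq> ?X" "ess_inf_on S f = (SUP i. c i)"
    using Sup_countable_SUP[of ?X] unfolding ess_inf_on_def by blast
  have "AE x in lebesgue. \<forall>i. x \<in> S \<longrightarrow> c i \<le> ereal (f x)"
    using c(1) by (subst AE_all_countable) auto
  then show ?thesis
    by eventually_elim (simp add: c(2) SUP_le_iff)
qed

lemma ess_sup_on_mono: "S \<subseteq> T \<Longrightarrow> ess_sup_on S f \<le> ess_sup_on T f"
  unfolding ess_sup_on_def by (rule Inf_superset_mono) (auto elim: eventually_mono)

lemma ess_inf_on_antimono: "S \<subseteq> T \<Longrightarrow> ess_inf_on T f \<le> ess_inf_on S f"
  unfolding ess_inf_on_def by (rule Sup_subset_mono) (auto elim: eventually_mono)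

lemma osc_mono: "S \<subseteq> T \<Longrightarrow> osc f S \<le> osc f T"
  unfolding osc_def by (intro ereal_minus_mono ess_sup_on_mono ess_inf_on_antimono)

lemma osc_cong_AE:
  assumes "AE x in lebesgue. f x = g x"
  shows "osc f S = osc g S"
proof -
  have eq: "(AE x in lebesgue. x \<in> S \<longrightarrow> P (f x)) \<longleftrightarrow> (AE x in lebesgue. x \<in> S \<longrightarrow> P (g x))" for P
    using assms by (auto elim: eventually_rev_mp)
  have sup: "{c. AE x in lebesgue. x \<in> S \<longrightarrow> ereal (f x) \<le> c} = {c. AE x in lebesgue. x \<in> S \<longrightarrow> ereal (g x) \<le> c}"
    using eq[of "\<lambda>y. ereal y \<le> _"] by blast
  have inf: "{c. AE x in lebesgue. x \<in> S \<longrightarrow> c \<le> ereal (f x)} = {c. AE x in lebesgue. x \<in> S \<longrightarrow> c \<le> ereal (g x)}"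
    using eq[of "\<lambda>y. _ \<le> ereal y"] by blast
  show ?thesis
    unfolding osc_def ess_sup_on_def ess_inf_on_def sup inf ..
qed

lemma abs_diff_real_of_ereal_le:
  fixes y :: real and i s :: ereal
  assumes "i \<le> ereal y" "ereal y \<le> s"
  shows "ereal \<bar>y - real_of_ereal i\<bar> \<le> s - i"
  using assms by (cases i; cases s) auto

text \<open>The junk value \<open>real_of_ereal (-\<infinity>) = 0\<close> is harmless: the oscillation is then infinite.\<close>
lemma AE_abs_diff_ess_inf_on_le_osc:
  "AE x in lebesgue. x \<in> S \<longrightarrow> ereal \<bar>f x - real_of_ereal (ess_inf_on S f)\<bar> \<le> osc f S"
  unfolding osc_def using AE_le_ess_sup_on[of S f] AE_ess_inf_on_le[of S f]
  by eventually_elim (blast intro: abs_diff_real_of_ereal_le)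

section \<open>Approximation by functions constant on grid cells\<close>

text \<open>The cells of mesh \<open>\<delta>\<close> are the half-open cubes \<open>\<delta> (p + [0, 1)\<^sup>d)\<close> with \<open>p\<close> an integer point;
  \<open>grid_index \<delta> x\<close> is the \<open>p\<close> of the cube containing \<open>x\<close>.\<close>
definition grid_index :: "real \<Rightarrow> 'a::euclidean_space \<Rightarrow> 'a" where
  "grid_index \<delta> x = (\<Sum>b\<in>Basis. of_int \<lfloor>(x \<bullet> b) / \<delta>\<rfloor> *\<^sub>R b)"

definition grid_cell :: "real \<Rightarrow> 'a::euclidean_space \<Rightarrow> 'a set" where
  "grid_cell \<delta> p = {y. grid_index \<delta> y = p}"

definition grid_value :: "real \<Rightarrow> ('a::euclidean_space \<Rightarrow> real) \<Rightarrow> 'a \<Rightarrow> real" where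
  "grid_value \<delta> f p = real_of_ereal (ess_inf_on (grid_cell \<delta> p) f)"

definition grid_approx :: "real \<Rightarrow> ('a::euclidean_space \<Rightarrow> real) \<Rightarrow> 'a \<Rightarrow> real" where
  "grid_approx \<delta> f x = grid_value \<delta> f (grid_index \<delta> x)"

lemma grid_index_inner: "b \<in> Basis \<Longrightarrow> grid_index \<delta> x \<bullet> b = of_int \<lfloor>(x \<bullet> b) / \<delta>\<rfloor>"
  unfolding grid_index_def by (simp add: inner_sum_left inner_Basis if_distrib sum.delta cong: if_cong)

lemma mem_grid_cell_self: "x \<in> grid_cell \<delta> (grid_index \<delta> x)"
  by (simp add: grid_cell_def)

lemma countable_range_grid_index: "countable (range (grid_index \<delta> :: 'a::euclidean_space \<Rightarrow> 'a))"
proof -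
  let ?F = "\<lambda>z::'a \<Rightarrow> int. (\<Sum>b\<in>Basis. of_int (z b) *\<^sub>R b) :: 'a"
  have "grid_index \<delta> x \<in> ?F ` (Basis \<rightarrow>\<^sub>E UNIV)" for x :: 'a
  proof (rule image_eqI[where x="restrict (\<lambda>b. \<lfloor>(x \<bullet> b) / \<delta>\<rfloor>) Basis"])
    show "grid_index \<delta> x = ?F (restrict (\<lambda>b. \<lfloor>(x \<bullet> b) / \<delta>\<rfloor>) Basis)"
      unfolding grid_index_def by (intro sum.cong) auto
  qed simp
  then have "range (grid_index \<delta>) \<subseteq> ?F ` (Basis \<rightarrow>\<^sub>E UNIV)"
    by blast
  moreover have "countable (?F ` (Basis \<rightarrow>\<^sub>E (UNIV :: int set)))"
    by (intro countable_image countable_PiE) auto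
  ultimately show ?thesis by (rule countable_subset)
qed

lemma borel_measurable_grid_index[measurable]: "grid_index \<delta> \<in> borel_measurable borel"
  unfolding grid_index_def by measurable

lemma sets_grid_cell[measurable]: "grid_cell \<delta> p \<in> sets borel"
proof -
  have "grid_cell \<delta> p = grid_index \<delta> -` {p} \<inter> space borel"
    by (auto simp: grid_cell_def)
  also have "\<dots> \<in> sets borel" by measurable
  finally show ?thesis .
qed

lemma borel_measurable_grid_approx[measurable]: "grid_approx \<delta> f \<in> borel_measurable borel"
proof -
  have index: "grid_index \<delta> \<in> measurable borel (count_space (range (grid_index \<delta>)))"
    using sets_grid_cell[of \<delta>]
    by (subst measurable_count_space_eq_countable[OF countable_range_grid_index])
       (auto simp: grid_cell_def vimage_def)
  show ?thesis
    unfolding grid_approx_def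
    by (rule measurable_compose_countable'[OF measurable_const index countable_range_grid_index])
      (simp only: space_borel UNIV_I)
qed

lemma grid_cell_subset_ball:
  fixes x :: "'a::euclidean_space" and \<delta> :: real
  assumes "0 < \<delta>"
  shows "grid_cell \<delta> (grid_index \<delta> x) \<subseteq> ball x (DIM('a) * \<delta>)"
proof
  fix y assume y: "y \<in> grid_cell \<delta> (grid_index \<delta> x)"
  have coord: "\<bar>(x - y) \<bullet> b\<bar> < \<delta>" if b: "b \<in> Basis" for b
  proof -
    have "\<lfloor>(y \<bullet> b) / \<delta>\<rfloor> = \<lfloor>(x \<bullet> b) / \<delta>\<rfloor>"
      using y b by (auto simp: grid_cell_def euclidean_eq_iff[of "grid_index \<delta> y"] grid_index_inner)
    then have "\<bar>(x \<bullet> b - y \<bullet> b) / \<delta>\<bar> < 1"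
      unfolding diff_divide_distrib by linarith
    then show ?thesis
      using assms by (simp add: inner_diff_left abs_divide)
  qed
  have "dist x y \<le> (\<Sum>b\<in>Basis. \<bar>(x - y) \<bullet> b\<bar>)"
    unfolding dist_norm by (rule norm_le_l1)
  also have "\<dots> < (\<Sum>b\<in>(Basis::'a set). \<delta>)"
    using coord by (intro sum_strict_mono) auto
  finally show "y \<in> ball x (DIM('a) * \<delta>)" by simp
qed

lemma box_subset_grid_cell:
  fixes x :: "'a::euclidean_space"
  assumes "0 < \<delta>"
  defines "p \<equiv> grid_index \<delta> x"
  shows "box (\<delta> *\<^sub>R p) (\<delta> *\<^sub>R p + \<delta> *\<^sub>R One) \<subseteq> grid_cell \<delta> p"
proof
  fix y assume y: "y \<in> box (\<delta> *\<^sub>R p) (\<delta> *\<^sub>R p + \<delta> *\<^sub>R One)"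
  have "\<lfloor>(y \<bullet> b) / \<delta>\<rfloor> = \<lfloor>(x \<bullet> b) / \<delta>\<rfloor>" if b: "b \<in> Basis" for b
  proof -
    have "\<delta> * (p \<bullet> b) < y \<bullet> b" "y \<bullet> b < \<delta> * (p \<bullet> b) + \<delta>"
      using y b by (auto simp: mem_box inner_add_left)
    then have "p \<bullet> b < (y \<bullet> b) / \<delta>" "(y \<bullet> b) / \<delta> < p \<bullet> b + 1"
      using assms(1) by (auto simp: field_simps)
    then show ?thesis
      using b by (simp add: p_def grid_index_inner) linarith
  qed
  then show "y \<in> grid_cell \<delta> p"
    by (simp add: grid_cell_def p_def euclidean_eq_iff[of "grid_index \<delta> y"] grid_index_inner)
qed

lemma emeasure_grid_cell_ge:
  fixes x :: "'a::euclidean_space"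
  assumes "0 < \<delta>"
  shows "ennreal (\<delta> ^ DIM('a)) \<le> emeasure lborel (grid_cell \<delta> (grid_index \<delta> x))"
proof -
  let ?p = "grid_index \<delta> x"
  have "emeasure lborel (box (\<delta> *\<^sub>R ?p) (\<delta> *\<^sub>R ?p + \<delta> *\<^sub>R One)) = ennreal (\<delta> ^ DIM('a))"
    using assms by (simp add: emeasure_lborel_box_eq inner_add_left prod_constant)
  moreover have "emeasure lborel (box (\<delta> *\<^sub>R ?p) (\<delta> *\<^sub>R ?p + \<delta> *\<^sub>R One)) \<le> emeasure lborel (grid_cell \<delta> ?p)"
    using box_subset_grid_cell[OF assms] by (intro emeasure_mono) auto
  ultimately show ?thesis by simp
qed

lemma AE_abs_diff_grid_approx_le_osc:
  fixes f :: "'a::euclidean_space \<Rightarrow> real" and \<delta> \<epsilon> :: real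
  assumes "0 < \<delta>" "DIM('a) * \<delta> \<le> \<epsilon>"
  shows "AE x in lborel. ennreal \<bar>f x - grid_approx \<delta> f x\<bar> \<le> e2ennreal (osc f (ball x \<epsilon>))"
proof -
  have "AE x in lebesgue. \<forall>p\<in>range (grid_index \<delta>). x \<in> grid_cell \<delta> p \<longrightarrow>
      ereal \<bar>f x - grid_value \<delta> f p\<bar> \<le> osc f (grid_cell \<delta> p)"
    unfolding grid_value_def
    by (intro AE_ball_countable' AE_abs_diff_ess_inf_on_le_osc countable_range_grid_index)
  then have "AE x in lebesgue. ereal \<bar>f x - grid_approx \<delta> f x\<bar> \<le> osc f (ball x \<epsilon>)"
  proof eventually_elim
    case (elim x)
    then have "ereal \<bar>f x - grid_approx \<delta> f x\<bar> \<le> osc f (grid_cell \<delta> (grid_index \<delta> x))"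
      using mem_grid_cell_self by (auto simp: grid_approx_def)
    also have "\<dots> \<le> osc f (ball x \<epsilon>)"
      using grid_cell_subset_ball[OF assms(1), of x] subset_ball[OF assms(2), of x]
      by (intro osc_mono) auto
    finally show ?case .
  qed
  then show ?thesis
    unfolding AE_completion_iff by eventually_elim (metis e2ennreal_ereal e2ennreal_mono)
qed

lemma nn_integral_grid_approx_error_le:
  fixes f \<psi>' :: "'a::euclidean_space \<Rightarrow> real" and \<delta> \<epsilon> m :: real
  assumes [measurable]: "\<psi>' \<in> borel_measurable borel" "f \<in> borel_measurable borel" "K \<in> sets borel"
    and "0 < \<delta>" "DIM('a) * \<delta> \<le> \<epsilon>" and lower: "\<And>x. x \<in> K \<Longrightarrow> m \<le> \<psi>' x"
  shows "ennreal m * (\<integral>\<^sup>+x. indicator K x * ennreal \<bar>f x - grid_approx \<delta> f x\<bar> \<partial>lborel)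
    \<le> (\<integral>\<^sup>+x. e2ennreal (osc f (ball x \<epsilon>)) \<partial>density lborel (\<lambda>x. ennreal (\<psi>' x)))"
proof -
  let ?h = "\<lambda>x. indicator K x * ennreal \<bar>f x - grid_approx \<delta> f x\<bar>"
  have "ennreal m * (\<integral>\<^sup>+x. ?h x \<partial>lborel) = (\<integral>\<^sup>+x. ennreal m * ?h x \<partial>lborel)"
    by (rule nn_integral_cmult[symmetric]) measurable
  also have "\<dots> \<le> (\<integral>\<^sup>+x. ennreal (\<psi>' x) * ?h x \<partial>lborel)"
    using lower by (intro nn_integral_mono) (auto intro!: mult_right_mono ennreal_leI split: split_indicator)
  also have "\<dots> = (\<integral>\<^sup>+x. ?h x \<partial>density lborel (\<lambda>x. ennreal (\<psi>' x)))"
    by (rule nn_integral_density[symmetric]) measurable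
  also have "\<dots> \<le> (\<integral>\<^sup>+x. e2ennreal (osc f (ball x \<epsilon>)) \<partial>density lborel (\<lambda>x. ennreal (\<psi>' x)))"
    using AE_abs_diff_grid_approx_le_osc[OF assms(4,5), of f]
    by (intro nn_integral_mono_AE, subst AE_density) (auto elim!: eventually_mono split: split_indicator)
  finally show ?thesis .
qed

lemma grid_approx_eq_on_grid_cell:
  "y \<in> grid_cell \<delta> (grid_index \<delta> x) \<Longrightarrow> grid_approx \<delta> f y = grid_approx \<delta> f x"
  by (simp add: grid_cell_def grid_approx_def)

lemma abs_grid_approx_mult_volume_le:
  fixes f :: "'a::euclidean_space \<Rightarrow> real"
  assumes [measurable]: "f \<in> borel_measurable borel" "K \<in> sets borel"
    and "0 < \<delta>" and cell: "grid_cell \<delta> (grid_index \<delta> x) \<subseteq> K"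
  shows "ennreal (\<bar>grid_approx \<delta> f x\<bar> * \<delta> ^ DIM('a))
    \<le> (\<integral>\<^sup>+y. ennreal \<bar>f y\<bar> \<partial>lborel) + (\<integral>\<^sup>+y. indicator K y * ennreal \<bar>f y - grid_approx \<delta> f y\<bar> \<partial>lborel)"
proof -
  let ?Q = "grid_cell \<delta> (grid_index \<delta> x)" and ?c = "\<bar>grid_approx \<delta> f x\<bar>"
  have "ennreal (?c * \<delta> ^ DIM('a)) = ennreal ?c * ennreal (\<delta> ^ DIM('a))"
    using assms(3) by (simp add: ennreal_mult)
  also have "\<dots> \<le> ennreal ?c * emeasure lborel ?Q"
    by (intro mult_left_mono emeasure_grid_cell_ge assms(3)) simp
  also have "\<dots> = (\<integral>\<^sup>+y. ennreal ?c * indicator ?Q y \<partial>lborel)"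
    by (rule nn_integral_cmult_indicator[symmetric]) simp
  also have "\<dots> \<le> (\<integral>\<^sup>+y. ennreal \<bar>f y\<bar> + indicator K y * ennreal \<bar>f y - grid_approx \<delta> f y\<bar> \<partial>lborel)"
  proof (rule nn_integral_mono)
    fix y
    show "ennreal ?c * indicator ?Q y \<le> ennreal \<bar>f y\<bar> + indicator K y * ennreal \<bar>f y - grid_approx \<delta> f y\<bar>"
    proof (cases "y \<in> ?Q")
      case True
      then have "y \<in> K" "grid_approx \<delta> f y = grid_approx \<delta> f x"
        using cell grid_approx_eq_on_grid_cell by auto
      moreover have "?c \<le> \<bar>f y\<bar> + \<bar>f y - grid_approx \<delta> f x\<bar>" by linarith
      ultimately show ?thesis
        using True by (simp add: ennreal_plus[symmetric] del: ennreal_plus)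
    qed simp
  qed
  also have "\<dots> = (\<integral>\<^sup>+y. ennreal \<bar>f y\<bar> \<partial>lborel) + (\<integral>\<^sup>+y. indicator K y * ennreal \<bar>f y - grid_approx \<delta> f y\<bar> \<partial>lborel)"
    by (rule nn_integral_add) measurable
  finally show ?thesis .
qed

section \<open>Convergence in L1\<close>

lemma ennreal_le_divide_of_mult_le:
  assumes "0 < m" "ennreal m * X \<le> ennreal c"
  shows "X \<le> ennreal (c / m)"
proof -
  have "X = ennreal (1 / m) * (ennreal m * X)"
    using assms(1) by (simp add: ennreal_mult[symmetric] mult.assoc[symmetric])
  also have "\<dots> \<le> ennreal (1 / m) * ennreal c"
    by (intro mult_left_mono assms(2)) simp
  also have "\<dots> = ennreal (c / m)"
    using assms(1) by (cases "0 \<le> c") (auto simp: ennreal_mult[symmetric] ennreal_neg divide_nonpos_pos)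
  finally show ?thesis .
qed

lemma nn_integral_abs_diff_le_of_AE_tendsto:
  fixes u :: "nat \<Rightarrow> 'a \<Rightarrow> real"
  assumes [measurable]: "\<And>m. u m \<in> borel_measurable M" "v \<in> borel_measurable M"
    and lim: "AE x in M. (\<lambda>m. u m x) \<longlonglongrightarrow> h x"
    and bound: "eventually (\<lambda>m. (\<integral>\<^sup>+x. ennreal \<bar>v x - u m x\<bar> \<partial>M) \<le> c) sequentially"
  shows "(\<integral>\<^sup>+x. ennreal \<bar>v x - h x\<bar> \<partial>M) \<le> c"
proof -
  have "(\<integral>\<^sup>+x. ennreal \<bar>v x - h x\<bar> \<partial>M) = (\<integral>\<^sup>+x. liminf (\<lambda>m. ennreal \<bar>v x - u m x\<bar>) \<partial>M)"
    using lim by (intro nn_integral_cong_AE)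
      (auto elim!: eventually_mono intro!: lim_imp_Liminf[symmetric] tendsto_intros)
  also have "\<dots> \<le> liminf (\<lambda>m. \<integral>\<^sup>+x. ennreal \<bar>v x - u m x\<bar> \<partial>M)"
    by (rule nn_integral_liminf) measurable
  also have "\<dots> \<le> limsup (\<lambda>m. \<integral>\<^sup>+x. ennreal \<bar>v x - u m x\<bar> \<partial>M)"
    by (rule Liminf_le_Limsup) simp
  also have "\<dots> \<le> c"
    using bound by (rule Limsup_bounded)
  finally show ?thesis .
qed

lemma L1_Cauchy_imp_tendsto_AE_limit:
  fixes f :: "nat \<Rightarrow> 'a \<Rightarrow> real"
  assumes [measurable]: "\<And>n. f n \<in> borel_measurable M"
    and Cauchy: "\<And>e. 0 < e \<Longrightarrow> \<exists>N. \<forall>i\<ge>N. \<forall>j\<ge>N. (\<integral>\<^sup>+x. ennreal \<bar>f i x - f j x\<bar> \<partial>M) < ennreal e"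
    and r: "strict_mono r" and lim: "AE x in M. (\<lambda>k. f (r k) x) \<longlonglongrightarrow> h x"
  shows "(\<lambda>k. \<integral>\<^sup>+x. ennreal \<bar>f (r k) x - h x\<bar> \<partial>M) \<longlonglongrightarrow> 0"
proof (rule order_tendstoI)
  fix a :: ennreal assume "0 < a"
  then obtain b where b: "0 < b" "b < a"
    using dense by blast
  then have "b < \<top>"
    using order.strict_trans2[OF b(2) top_greatest] by simp
  then obtain N where N: "\<forall>i\<ge>N. \<forall>j\<ge>N. (\<integral>\<^sup>+x. ennreal \<bar>f i x - f j x\<bar> \<partial>M) < b"
    using Cauchy[of "enn2real b"] b(1) by (auto simp: enn2real_positive_iff ennreal_enn2real)
  have "(\<integral>\<^sup>+x. ennreal \<bar>f (r k) x - h x\<bar> \<partial>M) \<le> b" if "k \<ge> N" for k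
  proof (rule nn_integral_abs_diff_le_of_AE_tendsto[OF _ _ lim])
    have "(\<integral>\<^sup>+x. ennreal \<bar>f (r k) x - f (r m) x\<bar> \<partial>M) \<le> b" if "m \<ge> N" for m
      using seq_suble[OF r, of k] seq_suble[OF r, of m] \<open>k \<ge> N\<close> that
      by (intro less_imp_le[OF N[rule_format]]) linarith+
    then show "\<forall>\<^sub>F m in sequentially. (\<integral>\<^sup>+x. ennreal \<bar>f (r k) x - f (r m) x\<bar> \<partial>M) \<le> b"
      unfolding eventually_sequentially by blast
  qed measurable
  then show "\<forall>\<^sub>F k in sequentially. (\<integral>\<^sup>+x. ennreal \<bar>f (r k) x - h x\<bar> \<partial>M) < a"
    unfolding eventually_sequentially using b(2) by (blast intro: le_less_trans)
qed simp

lemma L1_Cauchy_imp_subseq_L1_convergent: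
  fixes f :: "nat \<Rightarrow> 'a \<Rightarrow> real"
  assumes integrable: "\<And>n. integrable M (f n)"
    and Cauchy: "\<And>e. 0 < e \<Longrightarrow> \<exists>N. \<forall>i\<ge>N. \<forall>j\<ge>N. (\<integral>\<^sup>+x. ennreal \<bar>f i x - f j x\<bar> \<partial>M) < ennreal e"
  shows "\<exists>r h. strict_mono r \<and> integrable M h \<and> (\<lambda>k. \<integral>\<^sup>+x. ennreal \<bar>f (r k) x - h x\<bar> \<partial>M) \<longlonglongrightarrow> 0"
proof -
  have [measurable]: "f n \<in> borel_measurable M" for n
    using integrable by auto
  have LINT_Cauchy: "\<exists>N. \<forall>i\<ge>N. \<forall>j\<ge>N. (LINT x|M. norm (f i x - f j x)) < e" if e: "0 < e" for e
  proof -
    obtain N where N: "\<And>i j. i \<ge> N \<Longrightarrow> j \<ge> N \<Longrightarrow> (\<integral>\<^sup>+x. ennreal \<bar>f i x - f j x\<bar> \<partial>M) < ennreal e"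
      using Cauchy[OF e] by blast
    have "(\<integral>\<^sup>+x. ennreal \<bar>f i x - f j x\<bar> \<partial>M) = ennreal (LINT x|M. norm (f i x - f j x))" for i j
      using integrable by (subst nn_integral_eq_integral) auto
    then have "(LINT x|M. norm (f i x - f j x)) < e" if "i \<ge> N" "j \<ge> N" for i j
      using N[OF that] by (simp add: ennreal_less_iff)
    then show ?thesis by blast
  qed
  obtain r where r: "strict_mono r" "AE x in M. Cauchy (\<lambda>i. f (r i) x)"
    by (rule cauchy_L1_AE_cauchy_subseq[OF integrable LINT_Cauchy])
  define h where "h x = lim (\<lambda>i. f (r i) x)" for x
  have [measurable]: "h \<in> borel_measurable M"
    unfolding h_def by measurable
  have "AE x in M. (\<lambda>i. f (r i) x) \<longlonglongrightarrow> h x"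
    using r(2) by eventually_elim (simp add: h_def Cauchy_convergent_iff convergent_LIMSEQ_iff)
  then have tendsto: "(\<lambda>k. \<integral>\<^sup>+x. ennreal \<bar>f (r k) x - h x\<bar> \<partial>M) \<longlonglongrightarrow> 0"
    by (intro L1_Cauchy_imp_tendsto_AE_limit[OF _ Cauchy r(1)]) measurable
  have "integrable M h"
  proof -
    obtain N where "(\<integral>\<^sup>+x. ennreal \<bar>f (r N) x - h x\<bar> \<partial>M) < ennreal 1"
      using order_tendstoD(2)[OF tendsto, of "ennreal 1"] by (auto simp: eventually_sequentially)
    then have "(\<integral>\<^sup>+x. ennreal \<bar>f (r N) x - h x\<bar> \<partial>M) < \<top>"
      using ennreal_less_top by (rule less_trans)
    then have "integrable M (\<lambda>x. f (r N) x - h x)"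
      by (intro integrableI_bounded) simp_all
    with integrable have "integrable M (\<lambda>x. f (r N) x - (f (r N) x - h x))"
      by (rule Bochner_Integration.integrable_diff)
    then show ?thesis by simp
  qed
  with r(1) tendsto show ?thesis
    by blast
qed

lemma bounded_convergent_imp_nn_integral_tendsto:
  fixes u :: "nat \<Rightarrow> 'a \<Rightarrow> real"
  assumes [measurable]: "\<And>n. u n \<in> borel_measurable M" "K \<in> sets M"
    and finite: "emeasure M K < \<infinity>"
    and bound: "\<And>n x. x \<in> K \<Longrightarrow> \<bar>u n x\<bar> \<le> B"
    and conv: "\<And>x. x \<in> K \<Longrightarrow> convergent (\<lambda>n. u n x)"
  shows "(\<lambda>n. \<integral>\<^sup>+x. indicator K x * ennreal \<bar>lim (\<lambda>n. u n x) - u n x\<bar> \<partial>M) \<longlonglongrightarrow> 0"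
proof -
  define v where "v n x = indicator K x * u n x" for n x
  define w where "w x = indicator K x * lim (\<lambda>n. u n x)" for x
  have [measurable]: "v n \<in> borel_measurable M" for n
    unfolding v_def by measurable
  have [measurable]: "w \<in> borel_measurable M"
    unfolding w_def by measurable
  have "(\<lambda>n. \<integral>\<^sup>+x. norm (w x - v n x) \<partial>M) \<longlonglongrightarrow> 0"
  proof (rule nn_integral_dominated_convergence_norm[where w="\<lambda>x. indicator K x * B"])
    show "AE x in M. norm (v n x) \<le> indicator K x * B" for n
      using bound by (auto simp: v_def split: split_indicator)
    have "(\<integral>\<^sup>+x. ennreal (indicator K x * B) \<partial>M) = (\<integral>\<^sup>+x. ennreal B * indicator K x \<partial>M)"
      by (intro nn_integral_cong) (simp split: split_indicator)
    also have "\<dots> = ennreal B * emeasure M K"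
      by (rule nn_integral_cmult_indicator) simp
    also have "\<dots> < \<infinity>"
      using finite by (simp add: ennreal_mult_less_top)
    finally show "(\<integral>\<^sup>+x. ennreal (indicator K x * B) \<partial>M) < \<infinity>" .
    show "AE x in M. (\<lambda>n. v n x) \<longlonglongrightarrow> w x"
      using conv by (auto simp: v_def w_def convergent_LIMSEQ_iff split: split_indicator)
  qed measurable
  moreover have "(\<integral>\<^sup>+x. norm (w x - v n x) \<partial>M) = (\<integral>\<^sup>+x. indicator K x * ennreal \<bar>lim (\<lambda>n. u n x) - u n x\<bar> \<partial>M)" for n
    by (intro nn_integral_cong) (simp add: v_def w_def split: split_indicator)
  ultimately show ?thesis
    by simp
qed

lemma bounded_convergent_imp_nn_integral_Cauchy:
  fixes u :: "nat \<Rightarrow> 'a \<Rightarrow> real"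
  assumes [measurable]: "\<And>n. u n \<in> borel_measurable M" "K \<in> sets M"
    and "emeasure M K < \<infinity>" "\<And>n x. x \<in> K \<Longrightarrow> \<bar>u n x\<bar> \<le> B"
    and "\<And>x. x \<in> K \<Longrightarrow> convergent (\<lambda>n. u n x)" and "0 < \<eta>"
  shows "\<exists>N. \<forall>n\<ge>N. \<forall>m\<ge>N. (\<integral>\<^sup>+x. indicator K x * ennreal \<bar>u n x - u m x\<bar> \<partial>M) \<le> ennreal \<eta>"
proof -
  let ?L = "\<lambda>x. lim (\<lambda>n. u n x)"
  obtain N where N: "\<And>n. n \<ge> N \<Longrightarrow> (\<integral>\<^sup>+x. indicator K x * ennreal \<bar>?L x - u n x\<bar> \<partial>M) < ennreal (\<eta> / 2)"
    using order_tendstoD(2)[OF bounded_convergent_imp_nn_integral_tendsto[OF assms(1-5)], of "ennreal (\<eta> / 2)"]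
      \<open>0 < \<eta>\<close> by (auto simp: eventually_sequentially)
  have "(\<integral>\<^sup>+x. indicator K x * ennreal \<bar>u n x - u m x\<bar> \<partial>M) \<le> ennreal \<eta>" if "n \<ge> N" "m \<ge> N" for n m
  proof -
    have "(\<integral>\<^sup>+x. indicator K x * ennreal \<bar>u n x - u m x\<bar> \<partial>M)
        \<le> (\<integral>\<^sup>+x. indicator K x * ennreal \<bar>?L x - u n x\<bar> + indicator K x * ennreal \<bar>?L x - u m x\<bar> \<partial>M)"
    proof (rule nn_integral_mono)
      fix x
      have "\<bar>u n x - u m x\<bar> \<le> \<bar>?L x - u n x\<bar> + \<bar>?L x - u m x\<bar>"
        by linarith
      then show "indicator K x * ennreal \<bar>u n x - u m x\<bar>
          \<le> indicator K x * ennreal \<bar>?L x - u n x\<bar> + indicator K x * ennreal \<bar>?L x - u m x\<bar>"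
        by (simp add: ennreal_plus[symmetric] del: ennreal_plus split: split_indicator)
    qed
    also have "\<dots> = (\<integral>\<^sup>+x. indicator K x * ennreal \<bar>?L x - u n x\<bar> \<partial>M) + (\<integral>\<^sup>+x. indicator K x * ennreal \<bar>?L x - u m x\<bar> \<partial>M)"
      by (rule nn_integral_add) measurable
    also have "\<dots> \<le> ennreal (\<eta> / 2) + ennreal (\<eta> / 2)"
      using N that by (intro add_mono less_imp_le) auto
    also have "\<dots> = ennreal \<eta>"
      using \<open>0 < \<eta>\<close> by (simp add: ennreal_plus[symmetric] del: ennreal_plus)
    finally show ?thesis .
  qed
  then show ?thesis by blast
qed

lemma bounded_imp_diagonal_convergent_subseq:
  fixes c :: "nat \<Rightarrow> nat \<Rightarrow> 'a::heine_borel"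
  assumes "\<And>i. bounded (range (c i))"
  shows "\<exists>s. strict_mono s \<and> (\<forall>i. convergent (\<lambda>n. c i (s n)))"
proof -
  interpret subseqs "\<lambda>i s. convergent (\<lambda>n. c i (s n))"
  proof
    fix i and s :: "nat \<Rightarrow> nat"
    have "bounded (range (c i \<circ> s))"
      using assms[of i] by (rule bounded_subset) auto
    then obtain l r where "strict_mono r" "(c i \<circ> s \<circ> r) \<longlonglongrightarrow> l"
      using bounded_imp_convergent_subsequence by blast
    then show "\<exists>r. strict_mono r \<and> convergent (\<lambda>n. c i ((s \<circ> r) n))"
      by (auto simp: convergent_def o_def)
  qed
  have "convergent (\<lambda>n. c i (diagseq n))" for i
  proof -
    have "convergent (\<lambda>n. c i ((diagseq \<circ> (+) (Suc i)) n))"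
      by (rule diagseq_holds) (auto dest: convergent_subseq_convergent simp: o_def)
    then show ?thesis
      using convergent_ignore_initial_segment[of "\<lambda>n. c i (diagseq n)" "Suc i"]
      by (simp add: add.commute)
  qed
  then show ?thesis
    using subseq_diagseq by blast
qed

corollary countable_bounded_imp_diagonal_convergent_subseq:
  fixes c :: "'i \<Rightarrow> nat \<Rightarrow> 'a::heine_borel"
  assumes "countable I" and "\<And>i. i \<in> I \<Longrightarrow> bounded (range (c i))"
  shows "\<exists>s. strict_mono s \<and> (\<forall>i\<in>I. convergent (\<lambda>n. c i (s n)))"
proof (cases "I = {}")
  case True
  then show ?thesis
    using strict_mono_id by blast
next
  case False
  then obtain s where s: "strict_mono s" "\<And>j. convergent (\<lambda>n. c (from_nat_into I j) (s n))"
    using bounded_imp_diagonal_convergent_subseq[of "\<lambda>j. c (from_nat_into I j)"] assms(2) from_nat_into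
    by metis
  then show ?thesis
    using from_nat_into_surj[OF assms(1)] by metis
qed

lemma nn_integral_abs_diff_le_split:
  fixes f g a b :: "'a \<Rightarrow> real"
  assumes [measurable]: "f \<in> borel_measurable M" "g \<in> borel_measurable M"
    "a \<in> borel_measurable M" "b \<in> borel_measurable M" "K \<in> sets M" "- K \<in> sets M"
  shows "(\<integral>\<^sup>+x. ennreal \<bar>f x - g x\<bar> \<partial>M) \<le>
      (\<integral>\<^sup>+x. indicator K x * ennreal \<bar>f x - a x\<bar> \<partial>M) + (\<integral>\<^sup>+x. indicator K x * ennreal \<bar>a x - b x\<bar> \<partial>M)
    + (\<integral>\<^sup>+x. indicator K x * ennreal \<bar>g x - b x\<bar> \<partial>M)
    + (\<integral>\<^sup>+x. indicator (- K) x * ennreal \<bar>f x\<bar> \<partial>M) + (\<integral>\<^sup>+x. indicator (- K) x * ennreal \<bar>g x\<bar> \<partial>M)"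
proof -
  have "ennreal \<bar>f x - g x\<bar> \<le>
      indicator K x * ennreal \<bar>f x - a x\<bar> + indicator K x * ennreal \<bar>a x - b x\<bar>
    + indicator K x * ennreal \<bar>g x - b x\<bar>
    + indicator (- K) x * ennreal \<bar>f x\<bar> + indicator (- K) x * ennreal \<bar>g x\<bar>" for x
  proof (cases "x \<in> K")
    case True
    have "\<bar>f x - g x\<bar> \<le> \<bar>f x - a x\<bar> + \<bar>a x - b x\<bar> + \<bar>g x - b x\<bar>" by linarith
    with True show ?thesis by (simp add: ennreal_plus[symmetric] del: ennreal_plus)
  next
    case False
    have "\<bar>f x - g x\<bar> \<le> \<bar>f x\<bar> + \<bar>g x\<bar>" by linarith
    with False show ?thesis by (simp add: ennreal_plus[symmetric] del: ennreal_plus)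
  qed
  then have "(\<integral>\<^sup>+x. ennreal \<bar>f x - g x\<bar> \<partial>M) \<le> (\<integral>\<^sup>+x.
      indicator K x * ennreal \<bar>f x - a x\<bar> + indicator K x * ennreal \<bar>a x - b x\<bar>
    + indicator K x * ennreal \<bar>g x - b x\<bar>
    + indicator (- K) x * ennreal \<bar>f x\<bar> + indicator (- K) x * ennreal \<bar>g x\<bar> \<partial>M)"
    by (rule nn_integral_mono)
  also have "\<dots> = (\<integral>\<^sup>+x. indicator K x * ennreal \<bar>f x - a x\<bar> \<partial>M) + (\<integral>\<^sup>+x. indicator K x * ennreal \<bar>a x - b x\<bar> \<partial>M)
    + (\<integral>\<^sup>+x. indicator K x * ennreal \<bar>g x - b x\<bar> \<partial>M)
    + (\<integral>\<^sup>+x. indicator (- K) x * ennreal \<bar>f x\<bar> \<partial>M) + (\<integral>\<^sup>+x. indicator (- K) x * ennreal \<bar>g x\<bar> \<partial>M)"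
    by (simp add: nn_integral_add)
  finally show ?thesis .
qed

section \<open>Sequences bounded in the weighted BV norm\<close>

lemma rho_ge_1: "0 \<le> \<alpha> \<Longrightarrow> 1 \<le> rho \<alpha> x"
  unfolding rho_def by (intro ge_one_powr_ge_zero) auto

lemma norm_powr_le_rho:
  assumes "0 \<le> \<alpha>"
  shows "norm x powr \<alpha> \<le> rho \<alpha> x"
proof -
  have "norm x powr \<alpha> = (norm x powr 2) powr (\<alpha> / 2)"
    by (simp only: powr_powr) simp
  also have "\<dots> = ((norm x)\<^sup>2) powr (\<alpha> / 2)"
    by simp
  also have "\<dots> \<le> (1 + (norm x)\<^sup>2) powr (\<alpha> / 2)"
    using assms by (intro powr_mono2) auto
  finally show ?thesis
    unfolding rho_def .
qed

lemma continuous_on_pos_imp_ge_on_compact: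
  fixes f :: "'a::topological_space \<Rightarrow> real"
  assumes "compact K" "continuous_on K f" "\<And>x. x \<in> K \<Longrightarrow> 0 < f x"
  shows "\<exists>m>0. \<forall>x\<in>K. m \<le> f x"
proof (cases "K = {}")
  case False
  then obtain x0 where "x0 \<in> K" "\<forall>y\<in>K. f x0 \<le> f y"
    using continuous_attains_inf[OF assms(1) _ assms(2)] by blast
  then show ?thesis
    using assms(3) by blast
qed (auto intro: exI[of _ 1])

lemma L1w_norm_le_BVw_norm: "L1w_norm \<alpha> f \<le> BVw_norm \<psi> \<alpha> f"
  unfolding BVw_norm_def by (rule add_increasing2) auto

lemma osc_integral_le_BVw_norm:
  assumes "0 < \<epsilon>" "\<epsilon> \<le> 1"
  shows "(\<integral>\<^sup>+x. e2ennreal (osc f (ball x \<epsilon>)) \<partial>\<psi>) \<le> BVw_norm \<psi> \<alpha> f * ennreal \<epsilon>"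
proof -
  let ?I = "\<integral>\<^sup>+x. e2ennreal (osc f (ball x \<epsilon>)) \<partial>\<psi>"
  have "?I / ennreal \<epsilon> \<le> BVw_norm \<psi> \<alpha> f"
    unfolding BVw_norm_def using assms by (intro add_increasing SUP_upper2[of \<epsilon>]) auto
  then have "?I / ennreal \<epsilon> * ennreal \<epsilon> \<le> BVw_norm \<psi> \<alpha> f * ennreal \<epsilon>"
    by (rule mult_right_mono) simp
  then show ?thesis
    using assms(1) by (simp add: ennreal_divide_times)
qed

locale BV_bounded_sequence =
  fixes \<alpha> C :: real and \<psi>' :: "'a::euclidean_space \<Rightarrow> real" and g :: "nat \<Rightarrow> 'a \<Rightarrow> real"
  assumes alpha_pos: "0 < \<alpha>"
    and C_pos: "0 < C"
    and density_measurable [measurable]: "\<psi>' \<in> borel_measurable borel"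
    and density_bounded_below: "\<And>R. \<exists>m>0. \<forall>x\<in>cball 0 R. m \<le> \<psi>' x"
    and g_measurable [measurable]: "\<And>n. g n \<in> borel_measurable borel"
    and weighted_L1_bounded: "\<And>n. (\<integral>\<^sup>+x. ennreal (rho \<alpha> x * \<bar>g n x\<bar>) \<partial>lborel) \<le> ennreal C"
    and osc_integral_bounded: "\<And>n \<epsilon>. 0 < \<epsilon> \<Longrightarrow> \<epsilon> \<le> 1 \<Longrightarrow>
      (\<integral>\<^sup>+x. e2ennreal (osc (g n) (ball x \<epsilon>)) \<partial>density lborel (\<lambda>x. ennreal (\<psi>' x))) \<le> ennreal (C * \<epsilon>)"
begin

lemma L1_bounded: "(\<integral>\<^sup>+x. ennreal \<bar>g n x\<bar> \<partial>lborel) \<le> ennreal C"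
proof -
  have "(\<integral>\<^sup>+x. ennreal \<bar>g n x\<bar> \<partial>lborel) \<le> (\<integral>\<^sup>+x. ennreal (rho \<alpha> x * \<bar>g n x\<bar>) \<partial>lborel)"
  proof (intro nn_integral_mono ennreal_leI)
    fix x
    have "1 * \<bar>g n x\<bar> \<le> rho \<alpha> x * \<bar>g n x\<bar>"
      using rho_ge_1[of \<alpha> x] alpha_pos by (intro mult_right_mono) auto
    then show "\<bar>g n x\<bar> \<le> rho \<alpha> x * \<bar>g n x\<bar>" by simp
  qed
  also have "\<dots> \<le> ennreal C"
    by (rule weighted_L1_bounded)
  finally show ?thesis .
qed

lemma integrable_g: "integrable lborel (g n)"
proof -
  have "(\<integral>\<^sup>+x. ennreal \<bar>g n x\<bar> \<partial>lborel) < \<top>"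
    using L1_bounded ennreal_less_top by (rule le_less_trans)
  then show ?thesis
    by (intro integrableI_bounded) simp_all
qed

lemma tail_small:
  assumes "0 < \<eta>"
  shows "\<exists>R. \<forall>n. (\<integral>\<^sup>+x. indicator (- cball 0 R) x * ennreal \<bar>g n x\<bar> \<partial>lborel) \<le> ennreal \<eta>"
proof -
  define R where "R = (C / \<eta>) powr (1 / \<alpha>)"
  have large: "C / \<eta> \<le> rho \<alpha> x" if "x \<notin> cball 0 R" for x
  proof -
    have "C / \<eta> = R powr \<alpha>"
      using C_pos assms alpha_pos by (simp add: R_def powr_powr)
    also have "\<dots> \<le> norm x powr \<alpha>"
      using that alpha_pos by (intro powr_mono2) (auto simp: R_def)
    also have "\<dots> \<le> rho \<alpha> x"
      using alpha_pos by (intro norm_powr_le_rho) simp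
    finally show ?thesis .
  qed
  have "ennreal (C / \<eta>) * (\<integral>\<^sup>+x. indicator (- cball 0 R) x * ennreal \<bar>g n x\<bar> \<partial>lborel) \<le> ennreal C" for n
  proof -
    have "ennreal (C / \<eta>) * (\<integral>\<^sup>+x. indicator (- cball 0 R) x * ennreal \<bar>g n x\<bar> \<partial>lborel)
        = (\<integral>\<^sup>+x. ennreal (C / \<eta>) * (indicator (- cball 0 R) x * ennreal \<bar>g n x\<bar>) \<partial>lborel)"
      by (rule nn_integral_cmult[symmetric]) measurable
    also have "\<dots> \<le> (\<integral>\<^sup>+x. ennreal (rho \<alpha> x * \<bar>g n x\<bar>) \<partial>lborel)"
    proof (rule nn_integral_mono)
      fix x
      show "ennreal (C / \<eta>) * (indicator (- cball 0 R) x * ennreal \<bar>g n x\<bar>) \<le> ennreal (rho \<alpha> x * \<bar>g n x\<bar>)"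
      proof (cases "x \<in> cball 0 R")
        case False
        then have "C / \<eta> * \<bar>g n x\<bar> \<le> rho \<alpha> x * \<bar>g n x\<bar>"
          using large by (intro mult_right_mono) auto
        then show ?thesis
          using False C_pos assms by (simp add: ennreal_mult[symmetric] ennreal_leI)
      qed simp
    qed
    also have "\<dots> \<le> ennreal C"
      by (rule weighted_L1_bounded)
    finally show ?thesis .
  qed
  then have "(\<integral>\<^sup>+x. indicator (- cball 0 R) x * ennreal \<bar>g n x\<bar> \<partial>lborel) \<le> ennreal (C / (C / \<eta>))" for n
    using C_pos assms by (intro ennreal_le_divide_of_mult_le) auto
  then show ?thesis
    using C_pos by auto
qed

lemma grid_approx_error_le:
  fixes \<delta> :: real
  assumes "0 < \<delta>" "DIM('a) * \<delta> \<le> 1" and lower: "\<forall>x\<in>cball 0 R. m \<le> \<psi>' x"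
  shows "ennreal m * (\<integral>\<^sup>+x. indicator (cball 0 R) x * ennreal \<bar>g n x - grid_approx \<delta> (g n) x\<bar> \<partial>lborel)
    \<le> ennreal (C * (DIM('a) * \<delta>))"
  using nn_integral_grid_approx_error_le[OF density_measurable g_measurable _ assms(1) order_refl, of "cball 0 R" m]
    osc_integral_bounded[of "DIM('a) * \<delta>" n] assms
  by (auto intro: order_trans)

lemma grid_approx_bounded:
  fixes \<delta> :: real
  assumes "0 < \<delta>" "DIM('a) * \<delta> \<le> 1"
  shows "\<exists>B. \<forall>n. \<forall>x\<in>cball 0 R. \<bar>grid_approx \<delta> (g n) x\<bar> \<le> B"
proof -
  obtain m where m: "0 < m" "\<forall>x\<in>cball 0 (R + 1). m \<le> \<psi>' x"
    using density_bounded_below by blast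
  define B where "B = (C + C * (DIM('a) * \<delta>) / m) / \<delta> ^ DIM('a)"
  have "\<bar>grid_approx \<delta> (g n) x\<bar> \<le> B" if "x \<in> cball 0 R" for n x
  proof -
    have "grid_cell \<delta> (grid_index \<delta> x) \<subseteq> ball x 1"
      using grid_cell_subset_ball[OF assms(1), of x] subset_ball[OF assms(2)] by blast
    also have "\<dots> \<subseteq> cball 0 (R + 1)"
      using that by (intro order_trans[OF ball_subset_cball]) (auto simp: cball_subset_cball_iff dist_commute)
    finally have cell: "grid_cell \<delta> (grid_index \<delta> x) \<subseteq> cball 0 (R + 1)" .
    have "ennreal (\<bar>grid_approx \<delta> (g n) x\<bar> * \<delta> ^ DIM('a))
        \<le> (\<integral>\<^sup>+y. ennreal \<bar>g n y\<bar> \<partial>lborel)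
          + (\<integral>\<^sup>+y. indicator (cball 0 (R + 1)) y * ennreal \<bar>g n y - grid_approx \<delta> (g n) y\<bar> \<partial>lborel)"
      by (rule abs_grid_approx_mult_volume_le[OF g_measurable _ assms(1) cell]) simp
    also have "\<dots> \<le> ennreal C + ennreal (C * (DIM('a) * \<delta>) / m)"
      by (intro add_mono L1_bounded ennreal_le_divide_of_mult_le m(1) grid_approx_error_le assms m(2))
    also have "\<dots> = ennreal (C + C * (DIM('a) * \<delta>) / m)"
      using C_pos m(1) assms(1) by (simp add: ennreal_plus[symmetric] del: ennreal_plus)
    finally have "\<bar>grid_approx \<delta> (g n) x\<bar> * \<delta> ^ DIM('a) \<le> C + C * (DIM('a) * \<delta>) / m"
      using C_pos m(1) assms(1) by (subst (asm) ennreal_le_iff) auto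
    then show ?thesis
      using assms(1) by (simp add: B_def pos_le_divide_eq)
  qed
  then show ?thesis by blast
qed

lemma diagonal_subseq_grid_approx_convergent:
  fixes \<delta> :: "nat \<Rightarrow> real"
  assumes "\<And>k. 0 < \<delta> k" "\<And>k. DIM('a) * \<delta> k \<le> 1"
  shows "\<exists>s. strict_mono s \<and> (\<forall>k x. convergent (\<lambda>n. grid_approx (\<delta> k) (g (s n)) x))"
proof -
  let ?I = "SIGMA k:UNIV. range (grid_index (\<delta> k) :: 'a \<Rightarrow> 'a)"
  define c where "c = (\<lambda>(k, p) n. grid_value (\<delta> k) (g n) p)"
  have "bounded (range (c i))" if "i \<in> ?I" for i
  proof -
    obtain k x where i: "i = (k, grid_index (\<delta> k) x)"
      using \<open>i \<in> ?I\<close> by blast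
    obtain B where "\<forall>n. \<forall>y\<in>cball 0 (norm x). \<bar>grid_approx (\<delta> k) (g n) y\<bar> \<le> B"
      using grid_approx_bounded[OF assms] by blast
    then have "\<forall>n. \<bar>c i n\<bar> \<le> B"
      by (auto simp: i c_def grid_approx_def)
    then show ?thesis
      by (auto simp: bounded_iff)
  qed
  moreover have "countable ?I"
    by (intro countable_SIGMA countable_range_grid_index) simp
  ultimately obtain s where s: "strict_mono s" "\<forall>i\<in>?I. convergent (\<lambda>n. c i (s n))"
    using countable_bounded_imp_diagonal_convergent_subseq by metis
  have "convergent (\<lambda>n. grid_approx (\<delta> k) (g (s n)) x)" for k x
    using s(2) by (auto simp: c_def grid_approx_def)
  then show ?thesis
    using s(1) by blast
qed

lemma grid_approx_error_small:
  fixes \<delta> :: "nat \<Rightarrow> real"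
  assumes \<delta>: "\<And>k. 0 < \<delta> k" "\<And>k. DIM('a) * \<delta> k \<le> 1" "\<delta> \<longlonglongrightarrow> 0" and "0 < \<eta>"
  shows "\<exists>k. \<forall>n. (\<integral>\<^sup>+x. indicator (cball 0 R) x * ennreal \<bar>g n x - grid_approx (\<delta> k) (g n) x\<bar> \<partial>lborel)
    \<le> ennreal \<eta>"
proof -
  obtain m where m: "0 < m" "\<forall>x\<in>cball 0 R. m \<le> \<psi>' x"
    using density_bounded_below by blast
  have "eventually (\<lambda>k. \<delta> k < \<eta> * m / (C * DIM('a))) sequentially"
    using order_tendstoD(2)[OF \<delta>(3)] \<open>0 < \<eta>\<close> m(1) C_pos by simp
  then obtain k where k: "\<delta> k < \<eta> * m / (C * DIM('a))"
    by (auto simp: eventually_sequentially)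
  have "C * (DIM('a) * \<delta> k) / m \<le> \<eta>"
    using k m(1) C_pos by (simp add: field_simps)
  then have "(\<integral>\<^sup>+x. indicator (cball 0 R) x * ennreal \<bar>g n x - grid_approx (\<delta> k) (g n) x\<bar> \<partial>lborel)
      \<le> ennreal \<eta>" for n
    using ennreal_le_divide_of_mult_le[OF m(1) grid_approx_error_le[OF \<delta>(1,2) m(2)]]
    by (meson order_trans ennreal_leI)
  then show ?thesis by blast
qed

lemma grid_approx_convergent_imp_L1_Cauchy:
  fixes \<delta> :: "nat \<Rightarrow> real"
  assumes \<delta>: "\<And>k. 0 < \<delta> k" "\<And>k. DIM('a) * \<delta> k \<le> 1" "\<delta> \<longlonglongrightarrow> 0"
    and conv: "\<And>k x. convergent (\<lambda>n. grid_approx (\<delta> k) (g (s n)) x)"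
    and "0 < \<eta>"
  shows "\<exists>N. \<forall>n\<ge>N. \<forall>m\<ge>N. (\<integral>\<^sup>+x. ennreal \<bar>g (s n) x - g (s m) x\<bar> \<partial>lborel) < ennreal \<eta>"
proof -
  define \<eta>' where "\<eta>' = \<eta> / 6"
  have \<eta>': "0 < \<eta>'"
    using \<open>0 < \<eta>\<close> by (simp add: \<eta>'_def)
  obtain R where tail: "\<And>n. (\<integral>\<^sup>+x. indicator (- cball 0 R) x * ennreal \<bar>g n x\<bar> \<partial>lborel) \<le> ennreal \<eta>'"
    using tail_small[OF \<eta>'] by blast
  obtain k where approx:
    "\<And>n. (\<integral>\<^sup>+x. indicator (cball 0 R) x * ennreal \<bar>g n x - grid_approx (\<delta> k) (g n) x\<bar> \<partial>lborel) \<le> ennreal \<eta>'"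
    using grid_approx_error_small[OF \<delta> \<eta>'] by blast
  obtain B where B: "\<And>n x. x \<in> cball 0 R \<Longrightarrow> \<bar>grid_approx (\<delta> k) (g (s n)) x\<bar> \<le> B"
    using grid_approx_bounded[OF \<delta>(1)[of k] \<delta>(2)[of k], where R=R] by blast
  have g_meas: "g n \<in> borel_measurable lborel" for n
    by simp
  have grid_approx_meas: "grid_approx (\<delta> k) (g n) \<in> borel_measurable lborel" for n
    by simp
  have ball_sets: "cball 0 R \<in> sets lborel" "- cball 0 R \<in> sets lborel"
    by (simp_all add: borel_open open_Compl)
  have "\<exists>N. \<forall>n\<ge>N. \<forall>m\<ge>N. (\<integral>\<^sup>+x. indicator (cball 0 R) x
      * ennreal \<bar>grid_approx (\<delta> k) (g (s n)) x - grid_approx (\<delta> k) (g (s m)) x\<bar> \<partial>lborel) \<le> ennreal \<eta>'"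
    by (rule bounded_convergent_imp_nn_integral_Cauchy[OF grid_approx_meas ball_sets(1)
          emeasure_lborel_cball_finite B conv \<eta>'])
  then obtain N where N: "\<And>n m. n \<ge> N \<Longrightarrow> m \<ge> N \<Longrightarrow> (\<integral>\<^sup>+x. indicator (cball 0 R) x
      * ennreal \<bar>grid_approx (\<delta> k) (g (s n)) x - grid_approx (\<delta> k) (g (s m)) x\<bar> \<partial>lborel) \<le> ennreal \<eta>'"
    by blast
  have "(\<integral>\<^sup>+x. ennreal \<bar>g (s n) x - g (s m) x\<bar> \<partial>lborel) < ennreal \<eta>" if "n \<ge> N" "m \<ge> N" for n m
  proof -
    have "(\<integral>\<^sup>+x. ennreal \<bar>g (s n) x - g (s m) x\<bar> \<partial>lborel)
      \<le> ennreal \<eta>' + ennreal \<eta>' + ennreal \<eta>' + ennreal \<eta>' + ennreal \<eta>'"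
      by (rule order_trans[OF nn_integral_abs_diff_le_split[OF g_meas g_meas
            grid_approx_meas[of "s n"] grid_approx_meas[of "s m"] ball_sets]])
        (intro add_mono approx N tail that)
    also have "\<dots> < ennreal \<eta>"
      using \<open>0 < \<eta>\<close> by (simp add: \<eta>'_def ennreal_plus[symmetric] ennreal_less_iff del: ennreal_plus)
    finally show ?thesis .
  qed
  then show ?thesis by blast
qed

theorem L1_Cauchy_subseq:
  "\<exists>s::nat \<Rightarrow> nat. strict_mono s \<and>
    (\<forall>\<eta>>0. \<exists>N. \<forall>n\<ge>N. \<forall>m\<ge>N. (\<integral>\<^sup>+x. ennreal \<bar>g (s n) x - g (s m) x\<bar> \<partial>lborel) < ennreal \<eta>)"
proof -
  define \<delta> where "\<delta> k = inverse (real DIM('a)) * inverse (real (Suc k))" for k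
  have DIM_pos: "0 < real DIM('a)"
    using DIM_positive[where 'a='a] by simp
  then have \<delta>_pos: "0 < \<delta> k" for k
    by (simp add: \<delta>_def)
  have "DIM('a) * \<delta> k = inverse (real (Suc k))" for k
    using DIM_pos by (simp add: \<delta>_def mult.assoc[symmetric])
  then have \<delta>_le: "DIM('a) * \<delta> k \<le> 1" for k
    by (simp add: inverse_le_1_iff)
  have "\<delta> \<longlonglongrightarrow> inverse (real DIM('a)) * 0"
    unfolding \<delta>_def by (intro tendsto_mult tendsto_const LIMSEQ_inverse_real_of_nat)
  then have \<delta>_lim: "\<delta> \<longlonglongrightarrow> 0"
    by simp
  obtain s where s: "strict_mono s" "\<And>k x. convergent (\<lambda>n. grid_approx (\<delta> k) (g (s n)) x)"
    using diagonal_subseq_grid_approx_convergent[where \<delta>=\<delta>, OF \<delta>_pos \<delta>_le] by blast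
  show ?thesis
  proof (rule exI[of _ s], intro conjI allI impI)
    show "strict_mono s"
      by (rule s(1))
    show "\<exists>N. \<forall>n\<ge>N. \<forall>m\<ge>N. (\<integral>\<^sup>+x. ennreal \<bar>g (s n) x - g (s m) x\<bar> \<partial>lborel) < ennreal \<eta>"
      if "0 < \<eta>" for \<eta>
      by (rule grid_approx_convergent_imp_L1_Cauchy[where \<delta>=\<delta>, OF \<delta>_pos \<delta>_le \<delta>_lim s(2) that])
  qed
qed

end

lemma BV_bounded_sequence_of_Borel_representatives:
  fixes \<psi> :: "'a::euclidean_space measure" and \<psi>' :: "'a \<Rightarrow> real"
  assumes "0 < \<alpha>" "0 < C"
    and \<psi>: "\<psi> = density lborel (\<lambda>x. ennreal (\<psi>' x))"
    and "continuous_on UNIV \<psi>'" "\<And>x. 0 < \<psi>' x"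
    and BV: "\<And>n. BVw_norm \<psi> \<alpha> (g n) \<le> ennreal C"
    and gb: "\<And>n. gb n \<in> borel_measurable borel" "\<And>n. AE x in lborel. g n x = gb n x"
  shows "BV_bounded_sequence \<alpha> C \<psi>' gb"
proof
  show "\<psi>' \<in> borel_measurable borel"
    using assms(4) by (rule borel_measurable_continuous_onI)
  show "\<exists>m>0. \<forall>x\<in>cball 0 R. m \<le> \<psi>' x" for R
    using assms(4,5) by (intro continuous_on_pos_imp_ge_on_compact) (auto intro: continuous_on_subset)
  show "(\<integral>\<^sup>+x. ennreal (rho \<alpha> x * \<bar>gb n x\<bar>) \<partial>lborel) \<le> ennreal C" for n
  proof -
    have "(\<integral>\<^sup>+x. ennreal (rho \<alpha> x * \<bar>gb n x\<bar>) \<partial>lborel) = L1w_norm \<alpha> (g n)"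
      unfolding L1w_norm_def nn_integral_completion
      using gb(2)[of n] by (intro nn_integral_cong_AE) (auto elim: eventually_mono)
    then show ?thesis
      using L1w_norm_le_BVw_norm BV order_trans by metis
  qed
  show "(\<integral>\<^sup>+x. e2ennreal (osc (gb n) (ball x \<epsilon>)) \<partial>density lborel (\<lambda>x. ennreal (\<psi>' x))) \<le> ennreal (C * \<epsilon>)"
    if "0 < \<epsilon>" "\<epsilon> \<le> 1" for n \<epsilon>
  proof -
    have "osc (gb n) = osc (g n)"
      using gb(2)[of n] by (intro ext osc_cong_AE) (auto simp: AE_completion_iff elim: eventually_mono)
    then have "(\<integral>\<^sup>+x. e2ennreal (osc (gb n) (ball x \<epsilon>)) \<partial>density lborel (\<lambda>x. ennreal (\<psi>' x)))
        \<le> BVw_norm \<psi> \<alpha> (g n) * ennreal \<epsilon>"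
      using osc_integral_le_BVw_norm[OF that] unfolding \<psi> by simp
    also have "\<dots> \<le> ennreal C * ennreal \<epsilon>"
      by (intro mult_right_mono BV) simp
    finally show ?thesis
      using that assms(2) by (simp add: ennreal_mult)
  qed
qed (use assms gb in auto)

lemma BVw_norm_bounded_imp_Borel_BV_bounded_sequence:
  fixes \<psi> :: "'a::euclidean_space measure" and \<psi>' :: "'a \<Rightarrow> real" and g :: "nat \<Rightarrow> 'a \<Rightarrow> real"
  assumes "0 < \<alpha>" "\<psi> = density lborel (\<lambda>x. ennreal (\<psi>' x))"
    and "continuous_on UNIV \<psi>'" "\<And>x. 0 < \<psi>' x"
    and "\<And>n. g n \<in> borel_measurable lebesgue" "\<exists>C. \<forall>n. BVw_norm \<psi> \<alpha> (g n) \<le> ennreal C"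
  obtains C gb where "BV_bounded_sequence \<alpha> C \<psi>' gb"
    and "\<And>n. gb n \<in> borel_measurable borel" "\<And>n. AE x in lborel. g n x = gb n x"
proof -
  obtain C0 where C0: "\<And>n. BVw_norm \<psi> \<alpha> (g n) \<le> ennreal C0"
    using assms(6) by blast
  have C: "BVw_norm \<psi> \<alpha> (g n) \<le> ennreal (max C0 1)" for n
    using C0[of n] ennreal_leI[OF max.cobounded1[of C0 1]] by (rule order_trans)
  have "\<forall>n. \<exists>g'. g' \<in> borel_measurable borel \<and> (AE x in lborel. g n x = g' x)"
    using completion_ex_borel_measurable_real[OF assms(5)] by (simp add: Bex_def)
  from choice[OF this] obtain gb where gb:
    "\<And>n. gb n \<in> borel_measurable borel" "\<And>n. AE x in lborel. g n x = gb n x"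
    by blast
  have "BV_bounded_sequence \<alpha> (max C0 1) \<psi>' gb"
    by (rule BV_bounded_sequence_of_Borel_representatives[OF assms(1) _ assms(2-4) C gb]) simp
  with gb show ?thesis
    using that by blast
qed

lemma nn_integral_lebesgue_abs_diff_cong_AE:
  assumes "AE x in lborel. f x = f' x" "AE x in lborel. g x = g' x"
  shows "(\<integral>\<^sup>+x. ennreal \<bar>f x - g x\<bar> \<partial>lebesgue) = (\<integral>\<^sup>+x. ennreal \<bar>f' x - g' x\<bar> \<partial>lborel)"
proof -
  have "AE x in lborel. ennreal \<bar>f x - g x\<bar> = ennreal \<bar>f' x - g' x\<bar>"
    using assms by eventually_elim simp
  then show ?thesis
    unfolding nn_integral_completion by (rule nn_integral_cong_AE)
qed

lemma integrable_lebesgue_cong_AE: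
  fixes f f' :: "'a::euclidean_space \<Rightarrow> 'b::{banach, second_countable_topology}"
  assumes "f \<in> borel_measurable lebesgue" "f' \<in> borel_measurable borel"
    and "AE x in lborel. f x = f' x" "integrable lborel f'"
  shows "integrable lebesgue f"
proof -
  have "integrable lebesgue f'"
    using integrable_completion[of f' lborel] assms(2,4) by simp
  moreover have "AE x in lebesgue. f x = f' x"
    using assms(3) by (simp add: AE_completion_iff)
  ultimately show ?thesis
    using assms(1,2) by (subst integrable_cong_AE) (auto intro: measurable_completion)
qed

theorem theorem16:
  fixes \<psi> :: "'a::euclidean_space measure"
    and \<psi>' :: "'a \<Rightarrow> real"
    and \<alpha> :: real
    and g :: "nat \<Rightarrow> 'a \<Rightarrow> real"
  assumes "\<alpha> > 0"
    and "prob_space \<psi>"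
    and "\<psi> = density lborel (\<lambda>x. ennreal (\<psi>' x))"
    and "continuous_on UNIV \<psi>'"
    and "bounded (range \<psi>')"
    and "\<And>x. \<psi>' x > 0"
    and "\<And>n. g n \<in> borel_measurable lebesgue"
    and "\<exists>C::real. \<forall>n. BVw_norm \<psi> \<alpha> (g n) \<le> ennreal C"
  shows "\<exists>r h. strict_mono r \<and> integrable lebesgue h \<and>
           (\<lambda>n. \<integral>\<^sup>+ x. ennreal \<bar>g (r n) x - h x\<bar> \<partial>lebesgue) \<longlonglongrightarrow> 0"
proof -
  obtain C gb where BV: "BV_bounded_sequence \<alpha> C \<psi>' gb"
    and gb: "\<And>n. gb n \<in> borel_measurable borel" "\<And>n. AE x in lborel. g n x = gb n x"
    using BVw_norm_bounded_imp_Borel_BV_bounded_sequence[OF assms(1,3,4,6,7,8)] by blast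
  interpret BV_bounded_sequence \<alpha> C \<psi>' gb
    by (fact BV)
  obtain s :: "nat \<Rightarrow> nat" where s: "strict_mono s"
    "\<forall>\<eta>>0. \<exists>N. \<forall>n\<ge>N. \<forall>m\<ge>N. (\<integral>\<^sup>+x. ennreal \<bar>gb (s n) x - gb (s m) x\<bar> \<partial>lborel) < ennreal \<eta>"
    using L1_Cauchy_subseq by blast
  have "integrable lebesgue (g n)" for n
    using integrable_lebesgue_cong_AE[OF assms(7) gb(1) gb(2) integrable_g] .
  then obtain r h where r: "strict_mono r" and h: "integrable lebesgue h"
    and lim: "(\<lambda>k. \<integral>\<^sup>+x. ennreal \<bar>g (s (r k)) x - h x\<bar> \<partial>lebesgue) \<longlonglongrightarrow> 0"
    using L1_Cauchy_imp_subseq_L1_convergent[of lebesgue "\<lambda>n. g (s n)"] s(2)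
    unfolding nn_integral_lebesgue_abs_diff_cong_AE[OF gb(2) gb(2)] by blast
  have "strict_mono (s \<circ> r)"
    using s(1) r by (rule strict_mono_o)
  then show ?thesis
    using h lim by (intro exI[of _ "s \<circ> r"] exI[of _ h]) simp
qed

end
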